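(* For every ordinal $\alpha$ there exists a peripherally Hausdorff space $X$ with $\mathrm{rank}_{T_2}(X)=\alpha$.
   Context: For a topological space $X$ and $x\in X$, let $[x]:=\bigcap\{\overline{U}:U \text{ an open neighbourhood of } x\}$. Define $\alpha$-Hausdorff spaces by transfinite recursion: a space is $0$-Hausdorff if it is Hausdorff; for an ordinal $\alpha>0$, a $T_1$ space $X$ is $\alpha$-Hausdorff if for every $x\in X$ the subspace $[x]$ (with topology inherited from $X$) is $\beta_x$-Hausdorff for some ordinal $\beta_x<\alpha$. A space is peripherally Hausdorff if it is $\alpha$-Hausdorff for some ordinal $\alpha$, and then $\mathrm{rank}_{T_2}(X):=\min\{\alpha: X \text{ is } \alpha\text{-Hausdorff}\}$. *)

theory Defs
  imports "HOL-Analysis.Analysis"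
begin

definition nbhd_closure_core :: "'b topology \<Rightarrow> 'b \<Rightarrow> 'b set" where
  "nbhd_closure_core X x = \<Inter>{X closure_of U | U. openin X U \<and> x \<in> U}"

text \<open>Ordinals are represented by well-orders (up to order isomorphism); the ordinal
  zero is the well-order with empty field, and ordLess is ordinal comparison.
  alpha-Hausdorffness is defined by (well-founded) transfinite recursion, realised
  as an inductive predicate.  Smaller ordinals are represented on the same carrier
  type, which loses nothing since every ordinal below r is isomorphic to an
  initial segment of r.\<close>
inductive alpha_hausdorff :: "'a rel \<Rightarrow> 'b topology \<Rightarrow> bool" where
  zero: "\<lbrakk>Well_order r; Field r = {}; Hausdorff_space X\<rbrakk> \<Longrightarrow> alpha_hausdorff r X"
| pos: "\<lbrakk>Well_order r; Field r \<noteq> {}; t1_space X;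
          \<forall>x\<in>topspace X. \<exists>s. (s, r) \<in> ordLess \<and> alpha_hausdorff s (subtopology X (nbhd_closure_core X x))\<rbrakk>
        \<Longrightarrow> alpha_hausdorff r X"

definition peripherally_hausdorff :: "'a itself \<Rightarrow> 'b topology \<Rightarrow> bool" where
  "peripherally_hausdorff T X \<longleftrightarrow> (\<exists>r::'a rel. Well_order r \<and> alpha_hausdorff r X)"

definition T2_rank_is :: "'b topology \<Rightarrow> 'a rel \<Rightarrow> bool" where
  "T2_rank_is X r \<longleftrightarrow> Well_order r \<and> alpha_hausdorff r X \<and>
      (\<forall>s::'a rel. (s, r) \<in> ordLess \<longrightarrow> \<not> alpha_hausdorff s X)"

end

(*
  For a well-order r, a point of rank_space r A is a pair (G, n) of a finite subset G of A
  and a level n, and the topology makes (G, n) the limit of the points (final_seg r G b, k)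
  as k grows.  All non-isolated points whose largest element is beta are then limits of the
  isolated points ({beta}, k), so no two of them can be separated, whereas points with
  different largest elements can.  Hence the core [x] of a non-isolated point x is the
  stratum of non-isolated points sharing its largest element beta, and inserting beta maps
  the space built on the initial segment below beta homeomorphically onto this stratum;
  isolated points have trivial cores.  By transfinite induction the space built on an
  initial segment A is s-Hausdorff exactly when the order type of A is at most s, so the
  space on the whole field of r has T2-rank r.  An injective encoding of the points moves
  it to the type ('a + nat) set.
*)

theory Submission
  imports Defs
begin

unbundle cardinal_syntax

section \<open>Neighbourhood cores and homeomorphisms\<close>

lemma nbhd_closure_core_iff:
  assumes "x \<in> topspace X"
  shows "z \<in> nbhd_closure_core X x \<longleftrightarrow> z \<in> topspace X \<and>
     (\<forall>U V. openin X U \<longrightarrow> openin X V \<longrightarrow> x \<in> U \<longrightarrow> z \<in> V \<longrightarrow> U \<inter> V \<noteq> {})"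
proof -
  have "z \<in> nbhd_closure_core X x \<longleftrightarrow> (\<forall>U. openin X U \<and> x \<in> U \<longrightarrow> z \<in> X closure_of U)"
    unfolding nbhd_closure_core_def by blast
  also have "\<dots> \<longleftrightarrow> z \<in> topspace X \<and>
     (\<forall>U V. openin X U \<longrightarrow> openin X V \<longrightarrow> x \<in> U \<longrightarrow> z \<in> V \<longrightarrow> U \<inter> V \<noteq> {})"
    using assms openin_topspace[of X] unfolding in_closure_of by blast
  finally show ?thesis .
qed

lemma nbhd_closure_core_subset_topspace:
  "x \<in> topspace X \<Longrightarrow> nbhd_closure_core X x \<subseteq> topspace X"
  using nbhd_closure_core_iff by (metis subsetI)

lemma nbhd_closure_core_openin_Int:
  assumes "z \<in> nbhd_closure_core X x" and "openin X U" and "openin X V" and "x \<in> U" and "z \<in> V"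
  shows "U \<inter> V \<noteq> {}"
proof -
  have "x \<in> topspace X"
    using assms(2,4) openin_subset by blast
  then show ?thesis
    using assms unfolding nbhd_closure_core_iff[OF \<open>x \<in> topspace X\<close>] by blast
qed

lemma Hausdorff_space_nbhd_closure_core:
  assumes "Hausdorff_space X" and x: "x \<in> topspace X"
  shows "nbhd_closure_core X x \<subseteq> {x}"
proof
  fix z assume z: "z \<in> nbhd_closure_core X x"
  show "z \<in> {x}"
  proof (rule ccontr)
    assume "z \<notin> {x}"
    moreover have "z \<in> topspace X"
      using z nbhd_closure_core_subset_topspace[OF x] by blast
    ultimately obtain U V where "openin X U" "openin X V" "x \<in> U" "z \<in> V" "disjnt U V"
      using assms unfolding Hausdorff_space_def by blast
    then show False
      using nbhd_closure_core_openin_Int[OF z] unfolding disjnt_def by blast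
  qed
qed

lemma continuous_map_image_nbhd_closure_core:
  assumes f: "continuous_map X Y f" and x: "x \<in> topspace X"
  shows "f ` nbhd_closure_core X x \<subseteq> nbhd_closure_core Y (f x)"
proof
  fix z' assume "z' \<in> f ` nbhd_closure_core X x"
  then obtain z where z: "z \<in> nbhd_closure_core X x" and z': "z' = f z" by blast
  have fx: "f x \<in> topspace Y" and fz: "f z \<in> topspace Y"
    using f x z nbhd_closure_core_subset_topspace[OF x] continuous_map_image_subset_topspace by blast+
  show "z' \<in> nbhd_closure_core Y (f x)"
    unfolding nbhd_closure_core_iff[OF fx] z'
  proof (intro conjI fz allI impI)
    fix U V assume "openin Y U" "openin Y V" "f x \<in> U" "f z \<in> V"
    then have "{a \<in> topspace X. f a \<in> U} \<inter> {a \<in> topspace X. f a \<in> V} \<noteq> {}"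
      using z x openin_continuous_map_preimage[OF f] unfolding nbhd_closure_core_iff[OF x] by blast
    then show "U \<inter> V \<noteq> {}" by blast
  qed
qed

lemma homeomorphic_map_nbhd_closure_core:
  assumes f: "homeomorphic_map X Y f" and x: "x \<in> topspace X"
  shows "nbhd_closure_core Y (f x) = f ` nbhd_closure_core X x"
proof
  show "f ` nbhd_closure_core X x \<subseteq> nbhd_closure_core Y (f x)"
    using f x by (simp add: continuous_map_image_nbhd_closure_core homeomorphic_imp_continuous_map)
  obtain g where fg: "homeomorphic_maps X Y f g"
    using f homeomorphic_map_maps by blast
  have fx: "f x \<in> topspace Y"
    using f x homeomorphic_imp_surjective_map by blast
  have g_core: "g ` nbhd_closure_core Y (f x) \<subseteq> nbhd_closure_core X x"
    using continuous_map_image_nbhd_closure_core[of Y X g, OF _ fx] fg x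
    unfolding homeomorphic_maps_def by simp
  show "nbhd_closure_core Y (f x) \<subseteq> f ` nbhd_closure_core X x"
  proof
    fix y assume y: "y \<in> nbhd_closure_core Y (f x)"
    then have "f (g y) = y"
      using fg nbhd_closure_core_subset_topspace[OF fx] unfolding homeomorphic_maps_def by blast
    moreover have "g y \<in> nbhd_closure_core X x"
      using g_core y by blast
    ultimately show "y \<in> f ` nbhd_closure_core X x"
      by (metis image_eqI)
  qed
qed

lemma Hausdorff_space_subsingleton: "topspace X \<subseteq> {a} \<Longrightarrow> Hausdorff_space X"
  unfolding Hausdorff_space_def by blast

lemma bijective_openin_image_imp_homeomorphic_map:
  assumes inj: "inj_on f (topspace X)" and im: "f ` topspace X = topspace Y"
    and op: "\<And>U. U \<subseteq> topspace X \<Longrightarrow> openin X U \<longleftrightarrow> openin Y (f ` U)"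
  shows "homeomorphic_map X Y f"
proof (rule bijective_open_imp_homeomorphic_map[OF _ _ im inj])
  show "continuous_map X Y f"
    unfolding continuous_map_openin_preimage_eq
  proof (intro conjI allI impI)
    show "f \<in> topspace X \<rightarrow> topspace Y"
      unfolding image_subset_iff_funcset[symmetric] using im by simp
    fix V assume V: "openin Y V"
    have "f ` (topspace X \<inter> f -` V) = V"
    proof
      show "V \<subseteq> f ` (topspace X \<inter> f -` V)"
      proof
        fix y assume "y \<in> V"
        then have "y \<in> f ` topspace X"
          using im openin_subset[OF V] by blast
        then obtain x where "x \<in> topspace X" "y = f x"
          by blast
        with \<open>y \<in> V\<close> show "y \<in> f ` (topspace X \<inter> f -` V)"
          by blast
      qed
    qed blast
    then show "openin X (topspace X \<inter> f -` V)"
      using op[of "topspace X \<inter> f -` V"] V by simp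
  qed
  show "open_map X Y f"
    unfolding open_map_def
  proof (intro allI impI)
    fix U assume "openin X U"
    then show "openin Y (f ` U)"
      using op[OF openin_subset[OF \<open>openin X U\<close>]] by simp
  qed
qed

lemma inj_on_imp_homeomorphic_map:
  assumes "inj_on f (topspace X)"
  shows "\<exists>Y. homeomorphic_map X Y f"
proof -
  let ?g = "inv_into (topspace X) f"
  let ?Y = "pullback_topology (f ` topspace X) ?g X"
  have "continuous_map X ?Y f"
  proof (rule continuous_map_pullback')
    show "continuous_map X X (?g \<circ> f)"
      using continuous_map_id by (rule continuous_map_eq) (simp add: assms)
  qed auto
  moreover have "continuous_map ?Y X ?g"
    using continuous_map_pullback[OF continuous_map_id] by simp
  ultimately have "homeomorphic_maps X ?Y f ?g"
    unfolding homeomorphic_maps_def topspace_pullback_topology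
    by (auto simp: assms f_inv_into_f)
  then show ?thesis
    using homeomorphic_map_maps by blast
qed

section \<open>Ordinals and alpha-Hausdorff spaces\<close>

lemma Well_order_empty: "Well_order {}"
  by simp

lemma empty_ordLeq: "Well_order s \<Longrightarrow> Field s = {} \<Longrightarrow> Well_order t \<Longrightarrow> s \<le>o t"
  unfolding ordLeq_def embed_def by auto

lemma empty_ordLess: "Well_order s \<Longrightarrow> Field s \<noteq> {} \<Longrightarrow> {} <o s"
  unfolding ordLess_def embedS_def embed_def bij_betw_def
  using Well_order_empty by auto

lemma ordLess_imp_Field_nonempty:
  assumes "t <o s"
  shows "Field s \<noteq> {}"
proof
  assume "Field s = {}"
  then have "s \<le>o t"
    using assms empty_ordLeq unfolding ordLess_def by blast
  then show False
    using assms not_ordLess_ordLeq by blast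
qed

lemma Restr_underS_ordLess_Restr_ofilter:
  assumes W: "Well_order r" and A: "ofilter r A" and a: "a \<in> A"
  shows "Restr r (underS r a) <o Restr r A"
proof -
  have "underS r a \<subset> A"
    using A a underS_notIn[of a r] unfolding ofilter_def under_def underS_def by blast
  moreover have "ofilter r (underS r a)"
    by (simp add: W wo_rel.underS_ofilter wo_rel_def)
  ultimately show ?thesis
    using ofilter_subset_ordLess[OF W _ A] by blast
qed

lemma ordLess_Restr_ofilter_imp_ordIso:
  assumes W: "Well_order r" and A: "ofilter r A" and s: "Well_order s" and "s <o Restr r A"
  shows "\<exists>a\<in>A. (s, Restr r (underS r a)) \<in> ordIso"
proof -
  obtain a where a: "a \<in> A" and iso: "(s, Restr (Restr r A) (underS (Restr r A) a)) \<in> ordIso"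
    using assms ordLess_iff_ordIso_Restr[OF Well_order_Restr[OF W] s] Field_Restr_ofilter[OF W A]
    by blast
  have "Restr (Restr r A) (underS (Restr r A) a) = Restr r (underS r a)"
    using A a unfolding ofilter_def under_def underS_def by blast
  with a iso show ?thesis
    by metis
qed

lemma alpha_hausdorff_homeomorphic:
  fixes s :: "'a rel"
  assumes "alpha_hausdorff s X" and "X homeomorphic_space Y"
  shows "alpha_hausdorff s Y"
  using assms
proof (induction arbitrary: Y rule: alpha_hausdorff.induct)
  case (zero r X)
  have "Hausdorff_space Y"
    using homeomorphic_Hausdorff_space[OF zero.prems] zero.hyps(3) by simp
  with zero.hyps(1,2) show ?case
    by (rule alpha_hausdorff.zero)
next
  case (pos r X)
  obtain f where f: "homeomorphic_map X Y f"
    using pos.prems homeomorphic_space by blast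
  show ?case
  proof (rule alpha_hausdorff.pos)
    show "Well_order r" "Field r \<noteq> {}" by fact+
    show "t1_space Y"
      using homeomorphic_t1_space[OF pos.prems] pos.hyps(3) by simp
    show "\<forall>y\<in>topspace Y. \<exists>s::'a rel. s <o r \<and> alpha_hausdorff s (subtopology Y (nbhd_closure_core Y y))"
    proof
      fix y assume "y \<in> topspace Y"
      then obtain x where x: "x \<in> topspace X" and y: "y = f x"
        using f homeomorphic_imp_surjective_map by blast
      have "f ` (topspace X \<inter> nbhd_closure_core X x) = topspace Y \<inter> nbhd_closure_core Y y"
        using homeomorphic_map_nbhd_closure_core[OF f x] nbhd_closure_core_subset_topspace[OF x]
          nbhd_closure_core_subset_topspace[of y Y] \<open>y \<in> topspace Y\<close> y by auto
      then have "subtopology X (nbhd_closure_core X x) homeomorphic_space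
          subtopology Y (nbhd_closure_core Y y)"
        unfolding homeomorphic_space using homeomorphic_map_subtopologies[OF f] by blast
      then show "\<exists>s::'a rel. s <o r \<and> alpha_hausdorff s (subtopology Y (nbhd_closure_core Y y))"
        using pos.IH x by blast
    qed
  qed
qed

lemma Hausdorff_imp_alpha_hausdorff:
  assumes "Hausdorff_space X" and "Well_order s"
  shows "alpha_hausdorff s X"
proof (cases "Field s = {}")
  case True
  then show ?thesis
    using assms alpha_hausdorff.zero by blast
next
  case False
  have "alpha_hausdorff {} (subtopology X S)" for S
    by (rule alpha_hausdorff.zero[OF Well_order_empty _ Hausdorff_space_subtopology[OF assms(1)]]) simp
  with empty_ordLess[OF assms(2) False] show ?thesis
    by (intro alpha_hausdorff.pos[OF assms(2) False] Hausdorff_imp_t1_space[OF assms(1)]) blast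
qed

lemma alpha_hausdorff_nbhd_closure_core:
  fixes s :: "'a rel"
  assumes "alpha_hausdorff s X" and "\<not> Hausdorff_space X" and "x \<in> topspace X"
  shows "\<exists>s'::'a rel. s' <o s \<and> alpha_hausdorff s' (subtopology X (nbhd_closure_core X x))"
  using assms by (auto elim: alpha_hausdorff.cases)

section \<open>The spaces built on initial segments\<close>

definition final_seg :: "'a rel \<Rightarrow> 'a set \<Rightarrow> 'a \<Rightarrow> 'a set" where
  "final_seg r G b = {c \<in> G. c = b \<or> (b, c) \<in> r}"

(* The empty set only gets the levels 0 and 1, so that inserting beta maps
   rank_points (underS r beta) exactly onto the stratum of beta. *)
definition rank_points :: "'a set \<Rightarrow> ('a set \<times> nat) set" where
  "rank_points A = {(G, n). finite G \<and> G \<subseteq> A \<and> (G = {} \<longrightarrow> n \<le> 1)}"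

(* (G, n) is the limit of (final_seg r G b, k) as k grows, for every b in G except the least
   one when n >= 2; rank_open describes the finest topology with these limits. *)
definition rank_open :: "'a rel \<Rightarrow> 'a set \<Rightarrow> ('a set \<times> nat) set \<Rightarrow> bool" where
  "rank_open r A U \<longleftrightarrow> U \<subseteq> rank_points A \<and>
     (\<forall>G n b. (G, n) \<in> U \<longrightarrow> b \<in> G \<longrightarrow> final_seg r G b \<noteq> G \<or> n \<le> 1 \<longrightarrow>
        (\<forall>\<^sub>F k in sequentially. (final_seg r G b, k) \<in> U))"

definition rank_space :: "'a rel \<Rightarrow> 'a set \<Rightarrow> ('a set \<times> nat) topology" where
  "rank_space r A = topology (rank_open r A)"

definition rank_isolated :: "'a set \<times> nat \<Rightarrow> bool" where
  "rank_isolated p \<longleftrightarrow> fst p = {} \<or> (\<exists>b. fst p = {b} \<and> 2 \<le> snd p)"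

definition greatest_in :: "'a rel \<Rightarrow> 'a set \<Rightarrow> 'a \<Rightarrow> bool" where
  "greatest_in r G \<beta> \<longleftrightarrow> \<beta> \<in> G \<and> (\<forall>c\<in>G. c = \<beta> \<or> (c, \<beta>) \<in> r)"

definition rank_stratum :: "'a rel \<Rightarrow> 'a set \<Rightarrow> 'a \<Rightarrow> ('a set \<times> nat) set" where
  "rank_stratum r A \<beta> = {p \<in> rank_points A. greatest_in r (fst p) \<beta> \<and> \<not> rank_isolated p}"

definition rank_spike :: "'a \<Rightarrow> ('a set \<times> nat) set" where
  "rank_spike \<beta> = {({\<beta>}, k) | k. 2 \<le> k}"

definition basic_nbhd :: "'a rel \<Rightarrow> 'a set \<times> nat \<Rightarrow> nat \<Rightarrow> ('a set \<times> nat) set" where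
  "basic_nbhd r p m = insert p {(final_seg r (fst p) b, k) | b k. b \<in> fst p \<and> m \<le> k}"

lemma final_seg_subset: "final_seg r G b \<subseteq> G"
  by (auto simp: final_seg_def)

lemma final_seg_self: "b \<in> G \<Longrightarrow> b \<in> final_seg r G b"
  by (auto simp: final_seg_def)

lemma final_seg_final_seg:
  "trans r \<Longrightarrow> b' \<in> final_seg r G b \<Longrightarrow> final_seg r (final_seg r G b) b' = final_seg r G b'"
  unfolding final_seg_def trans_def by blast

lemma final_seg_in_rank_points:
  "(G, n) \<in> rank_points A \<Longrightarrow> b \<in> G \<Longrightarrow> (final_seg r G b, k) \<in> rank_points A"
  using final_seg_subset[of r G b] final_seg_self[of b G r] finite_subset
  unfolding rank_points_def by blast

lemma final_seg_greatest:
  "antisym r \<Longrightarrow> greatest_in r F \<beta> \<Longrightarrow> final_seg r F \<beta> = {\<beta>}"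
  unfolding final_seg_def greatest_in_def antisym_def by auto

lemma final_seg_insert:
  "G \<subseteq> underS r \<beta> \<Longrightarrow> b \<in> G \<Longrightarrow> final_seg r (insert \<beta> G) b = insert \<beta> (final_seg r G b)"
  unfolding final_seg_def underS_def by auto

lemma greatest_in_final_seg:
  "greatest_in r F \<beta> \<Longrightarrow> b \<in> F \<Longrightarrow> greatest_in r (final_seg r F b) \<beta>"
  unfolding final_seg_def greatest_in_def by auto

lemma greatest_in_insert_underS: "G \<subseteq> underS r \<beta> \<Longrightarrow> greatest_in r (insert \<beta> G) \<beta>"
  unfolding greatest_in_def underS_def by blast

lemma greatest_in_unique:
  "antisym r \<Longrightarrow> greatest_in r G \<beta> \<Longrightarrow> greatest_in r G \<gamma> \<Longrightarrow> \<beta> = \<gamma>"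
  unfolding greatest_in_def by (metis antisymD)

lemma greatest_in_exists:
  assumes W: "Well_order r"
  shows "finite F \<Longrightarrow> F \<noteq> {} \<Longrightarrow> F \<subseteq> Field r \<Longrightarrow> \<exists>\<beta>. greatest_in r F \<beta>"
proof (induction F rule: finite_ne_induct)
  case (singleton x)
  then show ?case
    unfolding greatest_in_def by blast
next
  case (insert x F)
  then obtain \<beta> where \<beta>: "greatest_in r F \<beta>"
    by blast
  have "\<beta> \<in> Field r" "x \<in> Field r"
    using \<beta> insert.prems unfolding greatest_in_def by auto
  then consider "x = \<beta> \<or> (x, \<beta>) \<in> r" | "(\<beta>, x) \<in> r"
    using W unfolding order_on_defs total_on_def by blast
  then show ?case
  proof cases
    case 1
    then have "greatest_in r (insert x F) \<beta>"
      using \<beta> unfolding greatest_in_def by auto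
    then show ?thesis ..
  next
    case 2
    have "trans r"
      using W unfolding order_on_defs by blast
    then have "greatest_in r (insert x F) x"
      using \<beta> 2 unfolding greatest_in_def by (auto dest: transD)
    then show ?thesis ..
  qed
qed

lemma istopology_rank_open: "istopology (rank_open r A)"
  unfolding istopology_def
proof (intro conjI allI impI)
  fix S T assume S: "rank_open r A S" and T: "rank_open r A T"
  show "rank_open r A (S \<inter> T)"
    unfolding rank_open_def
  proof (intro conjI allI impI)
    show "S \<inter> T \<subseteq> rank_points A"
      using S unfolding rank_open_def by blast
    fix G n b assume "(G, n) \<in> S \<inter> T" "b \<in> G" "final_seg r G b \<noteq> G \<or> n \<le> 1"
    then have "\<forall>\<^sub>F k in sequentially. (final_seg r G b, k) \<in> S"
      and "\<forall>\<^sub>F k in sequentially. (final_seg r G b, k) \<in> T"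
      using S T unfolding rank_open_def by blast+
    then show "\<forall>\<^sub>F k in sequentially. (final_seg r G b, k) \<in> S \<inter> T"
      by (simp add: eventually_conj_iff)
  qed
next
  fix K assume K: "\<forall>S\<in>K. rank_open r A S"
  show "rank_open r A (\<Union>K)"
    unfolding rank_open_def
  proof (intro conjI allI impI)
    show "\<Union>K \<subseteq> rank_points A"
      using K unfolding rank_open_def by blast
    fix G n b assume "(G, n) \<in> \<Union>K" "b \<in> G" "final_seg r G b \<noteq> G \<or> n \<le> 1"
    then obtain S where "S \<in> K" "\<forall>\<^sub>F k in sequentially. (final_seg r G b, k) \<in> S"
      using K unfolding rank_open_def by blast
    then show "\<forall>\<^sub>F k in sequentially. (final_seg r G b, k) \<in> \<Union>K"
      by (auto elim: eventually_mono)
  qed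
qed

lemma openin_rank_space: "openin (rank_space r A) U \<longleftrightarrow> rank_open r A U"
  unfolding rank_space_def topology_inverse'[OF istopology_rank_open] ..

lemma topspace_rank_space: "topspace (rank_space r A) = rank_points A"
proof
  have "rank_open r A (rank_points A)"
    unfolding rank_open_def by (auto simp: final_seg_in_rank_points)
  then show "rank_points A \<subseteq> topspace (rank_space r A)"
    by (metis openin_rank_space openin_subset)
  show "topspace (rank_space r A) \<subseteq> rank_points A"
    using openin_rank_space[of r A "topspace (rank_space r A)"] unfolding rank_open_def by simp
qed

lemma openin_rank_space_singleton:
  assumes "p \<in> rank_points A" and "rank_isolated p"
  shows "openin (rank_space r A) {p}"
proof -
  have "final_seg r G b = G" if "(G, n) = p" "b \<in> G" "2 \<le> n" for G n b
    using assms that unfolding rank_isolated_def final_seg_def by auto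
  then show ?thesis
    using assms unfolding openin_rank_space rank_open_def rank_isolated_def by fastforce
qed

lemma openin_rank_space_delete:
  "openin (rank_space r A) (rank_points A - {p})"
proof -
  have "\<forall>\<^sub>F k in sequentially. (final_seg r G b, k) \<in> rank_points A - {p}"
    if "(G, n) \<in> rank_points A" "b \<in> G" for G n b
    using eventually_gt_at_top[of "snd p"]
    by (rule eventually_mono) (use final_seg_in_rank_points[OF that] in auto)
  then show ?thesis
    unfolding openin_rank_space rank_open_def by blast
qed

lemma t1_space_rank_space: "t1_space (rank_space r A)"
  unfolding t1_space_closedin_singleton closedin_def topspace_rank_space
  using openin_rank_space_delete by blast

lemma openin_basic_nbhd:
  assumes "trans r" and p: "p \<in> rank_points A"
  shows "openin (rank_space r A) (basic_nbhd r p m)"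
  unfolding openin_rank_space rank_open_def
proof (intro conjI allI impI)
  show "basic_nbhd r p m \<subseteq> rank_points A"
    using p final_seg_in_rank_points[of "fst p" "snd p"] unfolding basic_nbhd_def by auto
  fix G n b assume G: "(G, n) \<in> basic_nbhd r p m" and b: "b \<in> G"
  have "b \<in> fst p \<and> final_seg r G b = final_seg r (fst p) b"
    using G b final_seg_final_seg[OF assms(1)] final_seg_subset
    unfolding basic_nbhd_def by fastforce
  then show "\<forall>\<^sub>F k in sequentially. (final_seg r G b, k) \<in> basic_nbhd r p m"
    unfolding basic_nbhd_def by (intro eventually_mono[OF eventually_ge_at_top[of m]]) auto
qed

lemma greatest_in_basic_nbhd:
  "greatest_in r (fst p) \<beta> \<Longrightarrow> q \<in> basic_nbhd r p m \<Longrightarrow> greatest_in r (fst q) \<beta>"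
  unfolding basic_nbhd_def using greatest_in_final_seg by fastforce

lemma rank_open_eventually_spike:
  assumes "antisym r" and "rank_open r A U" and "p \<in> U" and "greatest_in r (fst p) \<beta>"
    and "\<not> rank_isolated p"
  shows "\<forall>\<^sub>F k in sequentially. ({\<beta>}, k) \<in> U"
proof -
  have "final_seg r (fst p) \<beta> = {\<beta>}"
    using assms(1,4) by (rule final_seg_greatest)
  moreover have "\<beta> \<in> fst p"
    using assms(4) unfolding greatest_in_def by blast
  moreover have "final_seg r (fst p) \<beta> \<noteq> fst p \<or> snd p \<le> 1"
    using calculation assms(5) unfolding rank_isolated_def by fastforce
  ultimately show ?thesis
    using assms(2,3) unfolding rank_open_def by (metis prod.collapse)
qed

section \<open>Cores of points\<close>

lemma nbhd_closure_core_rank_isolated: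
  assumes "p \<in> rank_points A" and "rank_isolated p"
  shows "nbhd_closure_core (rank_space r A) p \<subseteq> {p}"
proof
  fix z assume z: "z \<in> nbhd_closure_core (rank_space r A) p"
  have "z \<in> rank_points A"
    using z assms(1) nbhd_closure_core_subset_topspace[of p "rank_space r A"]
    by (auto simp: topspace_rank_space)
  show "z \<in> {p}"
  proof (rule ccontr)
    assume "z \<notin> {p}"
    then have "{p} \<inter> (rank_points A - {p}) \<noteq> {}"
      using nbhd_closure_core_openin_Int[OF z openin_rank_space_singleton[OF assms]
          openin_rank_space_delete] \<open>z \<in> rank_points A\<close> by blast
    then show False
      by blast
  qed
qed

lemma alpha_hausdorff_nbhd_closure_core_rank_isolated:
  assumes "p \<in> rank_points A" and "rank_isolated p"
  shows "alpha_hausdorff {} (subtopology (rank_space r A) (nbhd_closure_core (rank_space r A) p))"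
proof -
  have "topspace (subtopology (rank_space r A) (nbhd_closure_core (rank_space r A) p)) \<subseteq> {p}"
    unfolding topspace_subtopology using nbhd_closure_core_rank_isolated[OF assms] by blast
  then show ?thesis
    by (rule Hausdorff_imp_alpha_hausdorff[OF Hausdorff_space_subsingleton Well_order_empty])
qed

lemma rank_points_greatest_in_exists:
  assumes W: "Well_order r" and A: "A \<subseteq> Field r" and p: "p \<in> rank_points A"
    and ni: "\<not> rank_isolated p"
  shows "\<exists>\<beta>\<in>A. greatest_in r (fst p) \<beta>"
proof -
  have "finite (fst p)" "fst p \<subseteq> A"
    using p unfolding rank_points_def by auto
  moreover have "fst p \<noteq> {}"
    using ni unfolding rank_isolated_def by blast
  ultimately obtain \<beta> where "greatest_in r (fst p) \<beta>"
    using greatest_in_exists[OF W] A by blast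
  moreover have "\<beta> \<in> A"
    using calculation \<open>fst p \<subseteq> A\<close> unfolding greatest_in_def by blast
  ultimately show ?thesis
    by blast
qed

lemma nbhd_closure_core_subset_rank_stratum:
  assumes W: "Well_order r" and A: "A \<subseteq> Field r" and p: "p \<in> rank_points A"
    and ni: "\<not> rank_isolated p" and \<beta>: "greatest_in r (fst p) \<beta>"
  shows "nbhd_closure_core (rank_space r A) p \<subseteq> rank_stratum r A \<beta>"
proof
  have tr: "trans r" and an: "antisym r"
    using W unfolding order_on_defs by blast+
  fix z assume z: "z \<in> nbhd_closure_core (rank_space r A) p"
  have zp: "z \<in> rank_points A"
    using z nbhd_closure_core_subset_topspace[of p "rank_space r A"] p
    unfolding topspace_rank_space by blast
  have zi: "\<not> rank_isolated z"
  proof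
    assume zi: "rank_isolated z"
    have "basic_nbhd r p (Suc (snd z)) \<inter> {z} \<noteq> {}"
      by (rule nbhd_closure_core_openin_Int[OF z openin_basic_nbhd[OF tr p]
          openin_rank_space_singleton[OF zp zi]]) (simp_all add: basic_nbhd_def)
    then have "z = p \<or> (\<exists>b k. z = (final_seg r (fst p) b, k) \<and> Suc (snd z) \<le> k)"
      unfolding basic_nbhd_def by blast
    then show False
      using ni zi by auto
  qed
  obtain \<gamma> where \<gamma>: "greatest_in r (fst z) \<gamma>"
    using rank_points_greatest_in_exists[OF W A zp zi] by blast
  have "basic_nbhd r p 0 \<inter> basic_nbhd r z 0 \<noteq> {}"
    by (rule nbhd_closure_core_openin_Int[OF z openin_basic_nbhd[OF tr p] openin_basic_nbhd[OF tr zp]])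
      (simp_all add: basic_nbhd_def)
  then have "\<beta> = \<gamma>"
    using greatest_in_basic_nbhd[OF \<beta>] greatest_in_basic_nbhd[OF \<gamma>] greatest_in_unique[OF an]
    by blast
  then show "z \<in> rank_stratum r A \<beta>"
    unfolding rank_stratum_def using zp zi \<gamma> by simp
qed

lemma rank_stratum_subset_nbhd_closure_core:
  assumes an: "antisym r" and p: "p \<in> rank_points A"
    and ni: "\<not> rank_isolated p" and \<beta>: "greatest_in r (fst p) \<beta>"
  shows "rank_stratum r A \<beta> \<subseteq> nbhd_closure_core (rank_space r A) p"
proof
  have pt: "p \<in> topspace (rank_space r A)"
    using p by (simp add: topspace_rank_space)
  fix z assume z: "z \<in> rank_stratum r A \<beta>"
  show "z \<in> nbhd_closure_core (rank_space r A) p"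
    unfolding nbhd_closure_core_iff[OF pt]
  proof (intro conjI allI impI)
    show "z \<in> topspace (rank_space r A)"
      using z unfolding rank_stratum_def topspace_rank_space by blast
    fix U V
    assume "openin (rank_space r A) U" "openin (rank_space r A) V" "p \<in> U" "z \<in> V"
    then have "\<forall>\<^sub>F k in sequentially. ({\<beta>}, k) \<in> U \<and> ({\<beta>}, k) \<in> V"
      using rank_open_eventually_spike[OF an, of A U p] rank_open_eventually_spike[OF an, of A V z]
        z ni \<beta> unfolding openin_rank_space rank_stratum_def by (simp add: eventually_conj_iff)
    then show "U \<inter> V \<noteq> {}"
      using eventually_happens' trivial_limit_sequentially by blast
  qed
qed

lemma nbhd_closure_core_rank_space:
  assumes W: "Well_order r" and A: "A \<subseteq> Field r" and p: "p \<in> rank_points A"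
    and ni: "\<not> rank_isolated p" and \<beta>: "greatest_in r (fst p) \<beta>"
  shows "nbhd_closure_core (rank_space r A) p = rank_stratum r A \<beta>"
proof
  show "nbhd_closure_core (rank_space r A) p \<subseteq> rank_stratum r A \<beta>"
    using nbhd_closure_core_subset_rank_stratum[OF assms] .
  have "antisym r"
    using W unfolding order_on_defs by blast
  then show "rank_stratum r A \<beta> \<subseteq> nbhd_closure_core (rank_space r A) p"
    using p ni \<beta> by (rule rank_stratum_subset_nbhd_closure_core)
qed

lemma Hausdorff_space_rank_space_iff:
  assumes W: "Well_order r" and A: "A \<subseteq> Field r"
  shows "Hausdorff_space (rank_space r A) \<longleftrightarrow> A = {}"
proof
  assume H: "Hausdorff_space (rank_space r A)"
  show "A = {}"
  proof (rule ccontr)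
    assume "A \<noteq> {}"
    then obtain \<beta> where "\<beta> \<in> A"
      by blast
    then have p: "({\<beta>}, 0) \<in> rank_points A" and q: "({\<beta>}, 1) \<in> rank_stratum r A \<beta>"
      unfolding rank_points_def rank_stratum_def greatest_in_def rank_isolated_def by auto
    have "({\<beta>}, 1) \<in> nbhd_closure_core (rank_space r A) ({\<beta>}, 0)"
      using q nbhd_closure_core_rank_space[OF W A p, of \<beta>]
      by (simp add: rank_isolated_def greatest_in_def)
    then show False
      using Hausdorff_space_nbhd_closure_core[OF H] p by (force simp: topspace_rank_space)
  qed
next
  assume "A = {}"
  then have iso: "rank_isolated p" if "p \<in> rank_points A" for p
    using that unfolding rank_points_def rank_isolated_def by auto
  show "Hausdorff_space (rank_space r A)"
    unfolding Hausdorff_space_def topspace_rank_space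
  proof (intro allI impI)
    fix x y assume "x \<in> rank_points A \<and> y \<in> rank_points A \<and> x \<noteq> y"
    then show "\<exists>U V. openin (rank_space r A) U \<and> openin (rank_space r A) V \<and> x \<in> U \<and> y \<in> V \<and> disjnt U V"
      using openin_rank_space_singleton[of x A r] openin_rank_space_singleton[of y A r] iso
      by (intro exI[of _ "{x}"] exI[of _ "{y}"]) (auto simp: disjnt_def)
  qed
qed

section \<open>Strata are copies of smaller spaces\<close>

lemma underS_subset_ofilter: "ofilter r A \<Longrightarrow> \<beta> \<in> A \<Longrightarrow> underS r \<beta> \<subseteq> A"
  unfolding ofilter_def under_def underS_def by blast

lemma rank_points_underS_notin: "(G, n) \<in> rank_points (underS r \<beta>) \<Longrightarrow> \<beta> \<notin> G"
  unfolding rank_points_def using underS_notIn by fast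

lemma final_seg_insert_eq_iff:
  assumes "G \<subseteq> underS r \<beta>" and "b \<in> G"
  shows "final_seg r (insert \<beta> G) b = insert \<beta> G \<longleftrightarrow> final_seg r G b = G"
proof -
  have "\<beta> \<notin> G" "\<beta> \<notin> final_seg r G b"
    using assms(1) final_seg_subset underS_notIn by fast+
  then show ?thesis
    using final_seg_insert[OF assms] insert_ident by metis
qed

lemma rank_spike_subset_rank_points: "\<beta> \<in> A \<Longrightarrow> rank_spike \<beta> \<subseteq> rank_points A"
  unfolding rank_spike_def rank_points_def by auto

lemma rank_stratum_subset_rank_points: "rank_stratum r A \<beta> \<subseteq> rank_points A"
  unfolding rank_stratum_def by blast

lemma insert_in_rank_stratum:
  assumes A: "ofilter r A" and \<beta>: "\<beta> \<in> A" and G: "(G, n) \<in> rank_points (underS r \<beta>)"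
  shows "(insert \<beta> G, n) \<in> rank_stratum r A \<beta>"
proof -
  have Gs: "finite G" "G \<subseteq> underS r \<beta>" "G = {} \<longrightarrow> n \<le> 1"
    using G unfolding rank_points_def by auto
  have "\<beta> \<notin> G"
    using G by (rule rank_points_underS_notin)
  have "(insert \<beta> G, n) \<in> rank_points A"
    using Gs underS_subset_ofilter[OF A \<beta>] \<beta> unfolding rank_points_def by auto
  moreover have "greatest_in r (insert \<beta> G) \<beta>"
    using Gs(2) by (rule greatest_in_insert_underS)
  moreover have "\<not> rank_isolated (insert \<beta> G, n)"
  proof
    assume "rank_isolated (insert \<beta> G, n)"
    then obtain b where "insert \<beta> G = {b}" and "2 \<le> n"
      unfolding rank_isolated_def by auto
    then have "G \<subseteq> {\<beta>}"
      by blast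
    then have "G = {}"
      using \<open>\<beta> \<notin> G\<close> by blast
    then show False
      using Gs(3) \<open>2 \<le> n\<close> by simp
  qed
  ultimately show ?thesis
    unfolding rank_stratum_def by simp
qed

lemma Diff_in_rank_points_underS:
  assumes "(G, n) \<in> rank_stratum r A \<beta>"
  shows "(G - {\<beta>}, n) \<in> rank_points (underS r \<beta>)"
proof -
  have G: "finite G" "greatest_in r G \<beta>" "\<not> rank_isolated (G, n)"
    using assms unfolding rank_stratum_def rank_points_def by auto
  have "G - {\<beta>} \<subseteq> underS r \<beta>"
    using G(2) unfolding greatest_in_def underS_def by blast
  moreover have "G - {\<beta>} = {} \<longrightarrow> n \<le> 1"
  proof
    assume "G - {\<beta>} = {}"
    then have "G = {\<beta>}"
      using G(2) unfolding greatest_in_def by blast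
    then show "n \<le> 1"
      using G(3) unfolding rank_isolated_def by simp
  qed
  ultimately show ?thesis
    using G(1) unfolding rank_points_def by blast
qed

lemma image_insert_rank_points_underS:
  assumes A: "ofilter r A" and \<beta>: "\<beta> \<in> A"
  shows "apfst (insert \<beta>) ` rank_points (underS r \<beta>) = rank_stratum r A \<beta>"
proof
  show "apfst (insert \<beta>) ` rank_points (underS r \<beta>) \<subseteq> rank_stratum r A \<beta>"
    using insert_in_rank_stratum[OF A \<beta>] by auto
  show "rank_stratum r A \<beta> \<subseteq> apfst (insert \<beta>) ` rank_points (underS r \<beta>)"
  proof
    fix q assume q: "q \<in> rank_stratum r A \<beta>"
    then have "\<beta> \<in> fst q"
      unfolding rank_stratum_def greatest_in_def by blast
    then have "q = apfst (insert \<beta>) (fst q - {\<beta>}, snd q)"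
      by (cases q) auto
    moreover have "(fst q - {\<beta>}, snd q) \<in> rank_points (underS r \<beta>)"
      using q by (intro Diff_in_rank_points_underS) simp
    ultimately show "q \<in> apfst (insert \<beta>) ` rank_points (underS r \<beta>)"
      by blast
  qed
qed

lemma inj_on_insert_rank_points_underS:
  "inj_on (apfst (insert \<beta>)) (rank_points (underS r \<beta>))"
proof (rule inj_onI)
  fix p q assume "p \<in> rank_points (underS r \<beta>)" "q \<in> rank_points (underS r \<beta>)"
    and "apfst (insert \<beta>) p = apfst (insert \<beta>) q"
  then show "p = q"
    using rank_points_underS_notin[of "fst p" "snd p" r \<beta>] rank_points_underS_notin[of "fst q" "snd q" r \<beta>]
    by (cases p, cases q) (simp add: insert_ident)
qed

lemma insert_in_image_insert_Un_rank_spike_iff: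
  assumes U: "U \<subseteq> rank_points (underS r \<beta>)" and H: "H \<subseteq> underS r \<beta>" "H \<noteq> {}"
  shows "(insert \<beta> H, k) \<in> apfst (insert \<beta>) ` U \<union> rank_spike \<beta> \<longleftrightarrow> (H, k) \<in> U"
proof -
  have "\<beta> \<notin> H"
    using H(1) underS_notIn by fast
  then have "insert \<beta> H \<noteq> {\<beta>}"
    using H(2) by blast
  moreover have "(insert \<beta> H, k) = apfst (insert \<beta>) q \<longleftrightarrow> q = (H, k)" if "q \<in> U" for q
    using that U rank_points_underS_notin[of "fst q" "snd q" r \<beta>] \<open>\<beta> \<notin> H\<close>
    by (cases q) (auto simp: insert_ident)
  ultimately show ?thesis
    unfolding rank_spike_def by auto
qed

lemma eventually_in_rank_spike: "\<forall>\<^sub>F k in sequentially. ({\<beta>}, k) \<in> rank_spike \<beta>"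
  unfolding rank_spike_def using eventually_ge_at_top[of 2] by (rule eventually_mono) blast

lemma rank_spike_final_seg:
  "(G, n) \<in> rank_spike \<beta> \<Longrightarrow> b \<in> G \<Longrightarrow> final_seg r G b = G \<and> 2 \<le> n"
  unfolding rank_spike_def final_seg_def by auto

lemma image_insert_Un_rank_spike_subset:
  assumes A: "ofilter r A" and \<beta>: "\<beta> \<in> A" and U: "U \<subseteq> rank_points (underS r \<beta>)"
  shows "apfst (insert \<beta>) ` U \<union> rank_spike \<beta> \<subseteq> rank_points A"
proof -
  have "apfst (insert \<beta>) ` U \<subseteq> rank_stratum r A \<beta>"
    using image_mono[OF U, of "apfst (insert \<beta>)"] unfolding image_insert_rank_points_underS[OF A \<beta>] .
  also have "\<dots> \<subseteq> rank_points A"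
    by (rule rank_stratum_subset_rank_points)
  finally show ?thesis
    using rank_spike_subset_rank_points[OF \<beta>] by blast
qed

(* The stratum of beta is not open, but adding the spike makes the images of open sets open:
   the sequences (final_seg r G beta, k) of the points (G, n) of the stratum run in the spike. *)
lemma rank_open_of_lift:
  assumes U: "U \<subseteq> rank_points (underS r \<beta>)"
    and T: "rank_open r A (apfst (insert \<beta>) ` U \<union> rank_spike \<beta>)"
  shows "rank_open r (underS r \<beta>) U"
  unfolding rank_open_def
proof (intro conjI allI impI U)
  fix G n b assume G: "(G, n) \<in> U" and b: "b \<in> G" and cond: "final_seg r G b \<noteq> G \<or> n \<le> 1"
  have Gs: "G \<subseteq> underS r \<beta>"
    using G U unfolding rank_points_def by auto
  have "(insert \<beta> G, n) \<in> apfst (insert \<beta>) ` U \<union> rank_spike \<beta>"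
    using imageI[OF G, of "apfst (insert \<beta>)"] by simp
  moreover have "final_seg r (insert \<beta> G) b \<noteq> insert \<beta> G \<or> n \<le> 1"
    using cond final_seg_insert_eq_iff[OF Gs b] by blast
  ultimately have "\<forall>\<^sub>F k in sequentially.
      (final_seg r (insert \<beta> G) b, k) \<in> apfst (insert \<beta>) ` U \<union> rank_spike \<beta>"
    using T b unfolding rank_open_def by blast
  then have "\<forall>\<^sub>F k in sequentially.
      (insert \<beta> (final_seg r G b), k) \<in> apfst (insert \<beta>) ` U \<union> rank_spike \<beta>"
    by (simp only: final_seg_insert[OF Gs b])
  moreover have "final_seg r G b \<subseteq> underS r \<beta>"
    using final_seg_subset Gs by (rule subset_trans)
  moreover have "final_seg r G b \<noteq> {}"
    using final_seg_self[OF b] by blast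
  ultimately show "\<forall>\<^sub>F k in sequentially. (final_seg r G b, k) \<in> U"
    using insert_in_image_insert_Un_rank_spike_iff[OF U] by simp
qed

lemma rank_open_lift:
  assumes an: "antisym r" and A: "ofilter r A" and \<beta>: "\<beta> \<in> A"
    and U: "U \<subseteq> rank_points (underS r \<beta>)" and U': "rank_open r (underS r \<beta>) U"
  shows "rank_open r A (apfst (insert \<beta>) ` U \<union> rank_spike \<beta>)"
  unfolding rank_open_def
proof (intro conjI allI impI)
  show "apfst (insert \<beta>) ` U \<union> rank_spike \<beta> \<subseteq> rank_points A"
    using A \<beta> U by (rule image_insert_Un_rank_spike_subset)
  fix G n b assume G: "(G, n) \<in> apfst (insert \<beta>) ` U \<union> rank_spike \<beta>" and b: "b \<in> G"
    and cond: "final_seg r G b \<noteq> G \<or> n \<le> 1"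
  show "\<forall>\<^sub>F k in sequentially. (final_seg r G b, k) \<in> apfst (insert \<beta>) ` U \<union> rank_spike \<beta>"
  proof (cases "(G, n) \<in> rank_spike \<beta>")
    case True
    then show ?thesis
      using rank_spike_final_seg[OF True b] cond by simp
  next
    case False
    then obtain G' where G': "(G', n) \<in> U" and GG': "G = insert \<beta> G'"
      using G by auto
    have G's: "G' \<subseteq> underS r \<beta>"
      using G' U unfolding rank_points_def by auto
    show ?thesis
    proof (cases "b = \<beta>")
      case True
      then have "final_seg r G b = {\<beta>}"
        using final_seg_greatest[OF an greatest_in_insert_underS[OF G's]] GG' by simp
      show ?thesis
        using eventually_in_rank_spike[of \<beta>]
        by (rule eventually_mono) (simp add: \<open>final_seg r G b = {\<beta>}\<close>)
    next
      case False
      then have b': "b \<in> G'"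
        using b GG' by blast
      have "final_seg r G' b \<noteq> G' \<or> n \<le> 1"
        using cond final_seg_insert_eq_iff[OF G's b'] GG' by blast
      then have "\<forall>\<^sub>F k in sequentially. (final_seg r G' b, k) \<in> U"
        using U' G' b' unfolding rank_open_def by blast
      then show ?thesis
        unfolding GG' final_seg_insert[OF G's b']
        by (rule eventually_mono) (metis Un_iff apfst_conv image_eqI)
    qed
  qed
qed

lemma rank_open_Int_stratum_Un_spike:
  assumes \<beta>: "\<beta> \<in> A" and T: "rank_open r A T"
  shows "rank_open r A (T \<inter> rank_stratum r A \<beta> \<union> rank_spike \<beta>)"
  unfolding rank_open_def
proof (intro conjI allI impI)
  show "T \<inter> rank_stratum r A \<beta> \<union> rank_spike \<beta> \<subseteq> rank_points A"
    using rank_stratum_subset_rank_points[of r A \<beta>] rank_spike_subset_rank_points[OF \<beta>] by blast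
  fix G n b assume G: "(G, n) \<in> T \<inter> rank_stratum r A \<beta> \<union> rank_spike \<beta>" and b: "b \<in> G"
    and cond: "final_seg r G b \<noteq> G \<or> n \<le> 1"
  have "(G, n) \<notin> rank_spike \<beta>"
    using rank_spike_final_seg[of G n \<beta> b r] b cond by auto
  then have Gn: "(G, n) \<in> T" "(G, n) \<in> rank_points A" "greatest_in r G \<beta>"
    using G unfolding rank_stratum_def by auto
  have stratum: "(final_seg r G b, k) \<in> rank_stratum r A \<beta> \<union> rank_spike \<beta>" for k
  proof (cases "rank_isolated (final_seg r G b, k)")
    case True
    have "\<beta> \<in> final_seg r G b"
      using greatest_in_final_seg[OF Gn(3) b] unfolding greatest_in_def by blast
    with True have "final_seg r G b = {\<beta>}" "2 \<le> k"
      unfolding rank_isolated_def by auto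
    then show ?thesis
      unfolding rank_spike_def by blast
  next
    case False
    then show ?thesis
      using final_seg_in_rank_points[OF Gn(2) b] greatest_in_final_seg[OF Gn(3) b]
      unfolding rank_stratum_def by simp
  qed
  have "\<forall>\<^sub>F k in sequentially. (final_seg r G b, k) \<in> T"
    using T Gn(1) b cond unfolding rank_open_def by blast
  then show "\<forall>\<^sub>F k in sequentially. (final_seg r G b, k) \<in> T \<inter> rank_stratum r A \<beta> \<union> rank_spike \<beta>"
    by (rule eventually_mono) (use stratum in blast)
qed

lemma rank_spike_Int_stratum: "rank_spike \<beta> \<inter> rank_stratum r A \<beta> = {}"
  unfolding rank_spike_def rank_stratum_def rank_isolated_def by auto

lemma openin_rank_stratum_image_iff:
  assumes an: "antisym r" and A: "ofilter r A" and \<beta>: "\<beta> \<in> A"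
    and U: "U \<subseteq> rank_points (underS r \<beta>)"
  shows "openin (subtopology (rank_space r A) (rank_stratum r A \<beta>)) (apfst (insert \<beta>) ` U) \<longleftrightarrow>
    rank_open r (underS r \<beta>) U"
  unfolding openin_subtopology openin_rank_space
proof
  assume "\<exists>T. rank_open r A T \<and> apfst (insert \<beta>) ` U = T \<inter> rank_stratum r A \<beta>"
  then obtain T where T: "rank_open r A T" and LUT: "apfst (insert \<beta>) ` U = T \<inter> rank_stratum r A \<beta>"
    by blast
  have "rank_open r A (apfst (insert \<beta>) ` U \<union> rank_spike \<beta>)"
    unfolding LUT using rank_open_Int_stratum_Un_spike[OF \<beta> T] .
  with U show "rank_open r (underS r \<beta>) U"
    by (rule rank_open_of_lift)
next
  assume U': "rank_open r (underS r \<beta>) U"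
  show "\<exists>T. rank_open r A T \<and> apfst (insert \<beta>) ` U = T \<inter> rank_stratum r A \<beta>"
  proof (intro exI conjI)
    show "rank_open r A (apfst (insert \<beta>) ` U \<union> rank_spike \<beta>)"
      using an A \<beta> U U' by (rule rank_open_lift)
    have "apfst (insert \<beta>) ` U \<subseteq> rank_stratum r A \<beta>"
      using image_mono[OF U, of "apfst (insert \<beta>)"] unfolding image_insert_rank_points_underS[OF A \<beta>] .
    then show "apfst (insert \<beta>) ` U = (apfst (insert \<beta>) ` U \<union> rank_spike \<beta>) \<inter> rank_stratum r A \<beta>"
      using rank_spike_Int_stratum[of \<beta> r A] by auto
  qed
qed

lemma homeomorphic_space_rank_stratum:
  assumes W: "Well_order r" and A: "ofilter r A" and \<beta>: "\<beta> \<in> A"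
  shows "rank_space r (underS r \<beta>) homeomorphic_space subtopology (rank_space r A) (rank_stratum r A \<beta>)"
proof -
  have an: "antisym r"
    using W unfolding order_on_defs by blast
  have "homeomorphic_map (rank_space r (underS r \<beta>))
      (subtopology (rank_space r A) (rank_stratum r A \<beta>)) (apfst (insert \<beta>))"
  proof (rule bijective_openin_image_imp_homeomorphic_map)
    show "inj_on (apfst (insert \<beta>)) (topspace (rank_space r (underS r \<beta>)))"
      unfolding topspace_rank_space by (rule inj_on_insert_rank_points_underS)
    show "apfst (insert \<beta>) ` topspace (rank_space r (underS r \<beta>)) =
        topspace (subtopology (rank_space r A) (rank_stratum r A \<beta>))"
      unfolding topspace_rank_space topspace_subtopology image_insert_rank_points_underS[OF A \<beta>]
      using rank_stratum_subset_rank_points[of r A \<beta>] by blast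
  qed (simp add: topspace_rank_space openin_rank_stratum_image_iff[OF an A \<beta>] openin_rank_space)
  then show ?thesis
    unfolding homeomorphic_space by blast
qed

lemma homeomorphic_space_nbhd_closure_core_rank_space:
  assumes W: "Well_order r" and A: "ofilter r A" and x: "x \<in> rank_points A"
    and ni: "\<not> rank_isolated x"
  shows "\<exists>\<beta>\<in>A. rank_space r (underS r \<beta>) homeomorphic_space
      subtopology (rank_space r A) (nbhd_closure_core (rank_space r A) x)"
proof -
  have AF: "A \<subseteq> Field r"
    using A unfolding ofilter_def by blast
  obtain \<beta> where "\<beta> \<in> A" and \<beta>: "greatest_in r (fst x) \<beta>"
    using rank_points_greatest_in_exists[OF W AF x ni] by blast
  then show ?thesis
    unfolding nbhd_closure_core_rank_space[OF W AF x ni \<beta>]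
    using homeomorphic_space_rank_stratum[OF W A] by blast
qed

section \<open>The rank\<close>

lemma alpha_hausdorff_rank_space_imp_ordLeq:
  fixes r s :: "'a rel"
  assumes W: "Well_order r" and A: "ofilter r A" and s: "Well_order s"
    and IH: "\<And>\<beta> s'::'a rel. \<beta> \<in> A \<Longrightarrow> Well_order s' \<Longrightarrow>
      alpha_hausdorff s' (rank_space r (underS r \<beta>)) \<Longrightarrow> Restr r (underS r \<beta>) \<le>o s'"
    and AH: "alpha_hausdorff s (rank_space r A)"
  shows "Restr r A \<le>o s"
proof (rule ccontr)
  assume "\<not> Restr r A \<le>o s"
  then have "s <o Restr r A"
    using not_ordLeq_iff_ordLess[OF s Well_order_Restr[OF W, of A]] by simp
  then obtain \<beta> where \<beta>: "\<beta> \<in> A" and iso: "(s, Restr r (underS r \<beta>)) \<in> ordIso"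
    using ordLess_Restr_ofilter_imp_ordIso[OF W A s] by blast
  have AF: "A \<subseteq> Field r"
    using A unfolding ofilter_def by blast
  let ?p = "({\<beta>}, 0::nat)"
  have p: "?p \<in> rank_points A"
    using \<beta> unfolding rank_points_def by simp
  have "\<not> Hausdorff_space (rank_space r A)"
    using Hausdorff_space_rank_space_iff[OF W AF] \<beta> by blast
  moreover have "?p \<in> topspace (rank_space r A)"
    using p by (simp add: topspace_rank_space)
  ultimately obtain s' :: "'a rel" where s': "s' <o s"
    and "alpha_hausdorff s' (subtopology (rank_space r A) (nbhd_closure_core (rank_space r A) ?p))"
    using alpha_hausdorff_nbhd_closure_core[OF AH] by blast
  moreover have "nbhd_closure_core (rank_space r A) ?p = rank_stratum r A \<beta>"
    by (rule nbhd_closure_core_rank_space[OF W AF p]) (simp_all add: rank_isolated_def greatest_in_def)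
  ultimately have "alpha_hausdorff s' (subtopology (rank_space r A) (rank_stratum r A \<beta>))"
    by simp
  then have "alpha_hausdorff s' (rank_space r (underS r \<beta>))"
    using alpha_hausdorff_homeomorphic homeomorphic_space_sym
      homeomorphic_space_rank_stratum[OF W A \<beta>] by blast
  then have "Restr r (underS r \<beta>) \<le>o s'"
    using IH[OF \<beta>] s' unfolding ordLess_def by blast
  then have "Restr r (underS r \<beta>) <o Restr r (underS r \<beta>)"
    using ordLeq_ordLess_trans[OF _ ordLess_ordIso_trans[OF s' iso]] by blast
  then show False
    using ordLess_irreflexive by blast
qed

lemma ordLeq_imp_alpha_hausdorff_rank_space:
  fixes r s :: "'a rel"
  assumes W: "Well_order r" and A: "ofilter r A" and s: "Well_order s"
    and IH: "\<And>\<beta>. \<beta> \<in> A \<Longrightarrow> alpha_hausdorff (Restr r (underS r \<beta>)) (rank_space r (underS r \<beta>))"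
    and le: "Restr r A \<le>o s"
  shows "alpha_hausdorff s (rank_space r A)"
proof (cases "A = {}")
  case True
  have "A \<subseteq> Field r"
    using A unfolding ofilter_def by blast
  with True show ?thesis
    using Hausdorff_space_rank_space_iff[OF W] Hausdorff_imp_alpha_hausdorff s by blast
next
  case False
  then obtain \<beta>0 where \<beta>0: "\<beta>0 \<in> A"
    by blast
  have less: "Restr r (underS r \<beta>) <o s" if "\<beta> \<in> A" for \<beta>
    using Restr_underS_ordLess_Restr_ofilter[OF W A that] le by (rule ordLess_ordLeq_trans)
  have Fs: "Field s \<noteq> {}"
    using less[OF \<beta>0] by (rule ordLess_imp_Field_nonempty)
  show ?thesis
  proof (rule alpha_hausdorff.pos[OF s Fs t1_space_rank_space], intro ballI)
    fix x assume "x \<in> topspace (rank_space r A)"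
    then have x: "x \<in> rank_points A"
      by (simp add: topspace_rank_space)
    show "\<exists>s'::'a rel. s' <o s \<and>
        alpha_hausdorff s' (subtopology (rank_space r A) (nbhd_closure_core (rank_space r A) x))"
    proof (cases "rank_isolated x")
      case True
      then show ?thesis
        using alpha_hausdorff_nbhd_closure_core_rank_isolated[OF x] empty_ordLess[OF s Fs] by blast
    next
      case False
      then obtain \<beta> where "\<beta> \<in> A" and "rank_space r (underS r \<beta>) homeomorphic_space
          subtopology (rank_space r A) (nbhd_closure_core (rank_space r A) x)"
        using homeomorphic_space_nbhd_closure_core_rank_space[OF W A x] by blast
      then show ?thesis
        using alpha_hausdorff_homeomorphic[OF IH] less by blast
    qed
  qed
qed

lemma alpha_hausdorff_rank_space_iff_ofilter:
  fixes r s :: "'a rel"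
  assumes W: "Well_order r" and A: "ofilter r A" and s: "Well_order s"
    and IH: "\<And>\<beta> s'::'a rel. \<beta> \<in> A \<Longrightarrow> Well_order s' \<Longrightarrow>
      alpha_hausdorff s' (rank_space r (underS r \<beta>)) \<longleftrightarrow> Restr r (underS r \<beta>) \<le>o s'"
  shows "alpha_hausdorff s (rank_space r A) \<longleftrightarrow> Restr r A \<le>o s"
proof
  assume "alpha_hausdorff s (rank_space r A)"
  then show "Restr r A \<le>o s"
    using alpha_hausdorff_rank_space_imp_ordLeq[OF W A s] IH by blast
next
  assume "Restr r A \<le>o s"
  moreover have "alpha_hausdorff (Restr r (underS r \<beta>)) (rank_space r (underS r \<beta>))" if "\<beta> \<in> A" for \<beta>
    using IH[OF that Well_order_Restr[OF W]] ordLeq_reflexive[OF Well_order_Restr[OF W]] by blast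
  ultimately show "alpha_hausdorff s (rank_space r A)"
    using ordLeq_imp_alpha_hausdorff_rank_space[OF W A s] by blast
qed

lemma alpha_hausdorff_rank_space_underS_iff:
  fixes r s :: "'a rel"
  assumes W: "Well_order r" and s: "Well_order s"
  shows "alpha_hausdorff s (rank_space r (underS r a)) \<longleftrightarrow> Restr r (underS r a) \<le>o s"
proof -
  have "wf (r - Id)"
    using W unfolding well_order_on_def by blast
  then show ?thesis
    using s
  proof (induction a arbitrary: s rule: wf_induct_rule)
    case (less a)
    show ?case
    proof (rule alpha_hausdorff_rank_space_iff_ofilter[OF W _ less.prems])
      show "ofilter r (underS r a)"
        by (simp add: W wo_rel.underS_ofilter wo_rel_def)
      fix \<beta> and s' :: "'a rel" assume "\<beta> \<in> underS r a" and "Well_order s'"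
      then show "alpha_hausdorff s' (rank_space r (underS r \<beta>)) \<longleftrightarrow> Restr r (underS r \<beta>) \<le>o s'"
        using less.IH[of \<beta> s'] unfolding underS_def by blast
    qed
  qed
qed

lemma alpha_hausdorff_rank_space_iff:
  fixes r s :: "'a rel"
  assumes W: "Well_order r" and s: "Well_order s"
  shows "alpha_hausdorff s (rank_space r (Field r)) \<longleftrightarrow> r \<le>o s"
proof -
  have "alpha_hausdorff s (rank_space r (Field r)) \<longleftrightarrow> Restr r (Field r) \<le>o s"
    using alpha_hausdorff_rank_space_iff_ofilter[OF W _ s] alpha_hausdorff_rank_space_underS_iff[OF W]
    by (simp add: W wo_rel.Field_ofilter wo_rel_def)
  then show ?thesis
    by (simp add: Restr_Field)
qed

definition encode_rank_point :: "'a set \<times> nat \<Rightarrow> ('a + nat) set" where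
  "encode_rank_point p = Inl ` fst p \<union> {Inr (snd p)}"

lemma inj_encode_rank_point: "inj encode_rank_point"
proof (rule injI)
  have decode: "Inl -` encode_rank_point p = fst p" "Inr -` encode_rank_point p = {snd p}" for p
    unfolding encode_rank_point_def by auto
  fix p q :: "'a set \<times> nat"
  assume "encode_rank_point p = encode_rank_point q"
  then have "fst p = fst q" "{snd p} = {snd q}"
    by (metis decode)+
  then show "p = q"
    by (simp add: prod_eq_iff)
qed

theorem theorem18:
  fixes r :: "'a rel"
  assumes "Well_order r"
  shows "\<exists>X :: ('a + nat) set topology.
           peripherally_hausdorff TYPE('a) X \<and> T2_rank_is X r"
proof -
  obtain X :: "('a + nat) set topology"
    where "homeomorphic_map (rank_space r (Field r)) X encode_rank_point"
    using inj_on_imp_homeomorphic_map inj_on_subset[OF inj_encode_rank_point subset_UNIV] by blast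
  then have VX: "rank_space r (Field r) homeomorphic_space X"
    unfolding homeomorphic_space by blast
  have rank: "alpha_hausdorff s X \<longleftrightarrow> r \<le>o s" if "Well_order s" for s :: "'a rel"
    using alpha_hausdorff_homeomorphic[OF _ VX]
      alpha_hausdorff_homeomorphic[OF _ VX[THEN homeomorphic_space_sym[THEN iffD1]]]
      alpha_hausdorff_rank_space_iff[OF assms that] by blast
  have "alpha_hausdorff r X"
    using rank[OF assms] ordLeq_reflexive[OF assms] by simp
  moreover have "\<not> alpha_hausdorff s X" if "s <o r" for s :: "'a rel"
    using rank[of s] that not_ordLess_ordLeq unfolding ordLess_def by blast
  ultimately show ?thesis
    unfolding peripherally_hausdorff_def T2_rank_is_def using assms by blast
qed

end
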